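(* Let $R$ be a ring, and let $A$ and $B$ be $R$-algebras that are integral domains. Assume that $A$ is of finite expansion over $R$ and that $B$ is normal, and let $\mathfrak{p} \subset B$ be a prime ideal. Let $\phi: A \to B_\mathfrak{p}$ be a homomorphism of $R$-algebras. Then there exists $f \in B \setminus \mathfrak{p}$ such that $\phi$ factors as $A \to B_f \to B_\mathfrak{p}$, where $B_f \to B_\mathfrak{p}$ is the canonical localization map.
   Context: An $R$-algebra $A$ is of finite expansion over $R$ if there exist finitely many elements $a_1,\dots,a_n \in A$ such that $A$ is integral over the subalgebra $R[a_1,\dots,a_n]$. A domain is normal if it is integrally closed in its field of fractions. *)

theory Defs
  imports "HOL-Computational_Algebra.Polynomial" "HOL-Computational_Algebra.Fraction_Field"
begin

definition is_ring_hom :: "('a::comm_ring_1 \<Rightarrow> 'b::comm_ring_1) \<Rightarrow> bool" where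
  "is_ring_hom f \<longleftrightarrow> f 1 = 1 \<and> (\<forall>x y. f (x + y) = f x + f y) \<and> (\<forall>x y. f (x * y) = f x * f y)"

definition is_subring :: "'a::comm_ring_1 set \<Rightarrow> bool" where
  "is_subring S \<longleftrightarrow> 1 \<in> S \<and> (\<forall>x\<in>S. \<forall>y\<in>S. x + y \<in> S \<and> x * y \<in> S \<and> - x \<in> S)"

definition gen_subalgebra :: "('r::comm_ring_1 \<Rightarrow> 'a::comm_ring_1) \<Rightarrow> 'a list \<Rightarrow> 'a set" where
  "gen_subalgebra iA as = \<Inter>{T. is_subring T \<and> range iA \<subseteq> T \<and> set as \<subseteq> T}"

definition integral_over :: "'a::comm_ring_1 set \<Rightarrow> 'a \<Rightarrow> bool" where
  "integral_over S x \<longleftrightarrow> (\<exists>p::'a poly. lead_coeff p = 1 \<and> (\<forall>i. coeff p i \<in> S) \<and> poly p x = 0)"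

definition finite_expansion :: "('r::comm_ring_1 \<Rightarrow> 'a::comm_ring_1) \<Rightarrow> bool" where
  "finite_expansion iA \<longleftrightarrow> (\<exists>as. \<forall>x. integral_over (gen_subalgebra iA as) x)"

definition normal_domain :: "'b::idom itself \<Rightarrow> bool" where
  "normal_domain _ \<longleftrightarrow>
     (\<forall>z::'b fract. integral_over (range (\<lambda>b. Fract b 1)) z \<longrightarrow> z \<in> range (\<lambda>b. Fract b 1))"

definition is_ideal :: "'a::comm_ring_1 set \<Rightarrow> bool" where
  "is_ideal I \<longleftrightarrow> 0 \<in> I \<and> (\<forall>x\<in>I. \<forall>y\<in>I. x + y \<in> I) \<and> (\<forall>x\<in>I. \<forall>r. r * x \<in> I)"

definition prime_ideal :: "'a::comm_ring_1 set \<Rightarrow> bool" where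
  "prime_ideal P \<longleftrightarrow> is_ideal P \<and> P \<noteq> UNIV \<and> (\<forall>x y. x * y \<in> P \<longrightarrow> x \<in> P \<or> y \<in> P)"

text \<open>Localization B_p of a domain B at a prime p, realised inside Frac(B).\<close>
definition loc_prime :: "'b::idom set \<Rightarrow> 'b fract set" where
  "loc_prime P = {Fract b s | b s. s \<notin> P}"

definition loc_elem :: "'b::idom \<Rightarrow> 'b fract set" where
  "loc_elem f = {Fract b (f ^ n) | b n. True}"

end

theory Submission
  imports Defs
begin

text \<open>
  Write \<open>A\<close> as integral over \<open>R[a\<^sub>1,\<dots>,a\<^sub>n]\<close>. The finitely many images \<open>\<phi> a\<^sub>i \<in> B\<^sub>\<frakp>\<close> have
  a common denominator \<open>f \<notin> \<frakp>\<close>, so \<open>\<phi>\<close> maps \<open>R[a\<^sub>1,\<dots>,a\<^sub>n]\<close> into \<open>B\<^sub>f\<close>. Every \<open>\<phi> x\<close> is then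
  integral over \<open>B\<^sub>f\<close>, and \<open>B\<^sub>f\<close>, being a localization of the normal domain \<open>B\<close>, is
  integrally closed in \<open>Frac B\<close>; hence \<open>\<phi>\<close> takes values in \<open>B\<^sub>f\<close>.
\<close>

lemma is_ring_hom_0: "is_ring_hom f \<Longrightarrow> f 0 = 0"
  unfolding is_ring_hom_def by (metis add_cancel_right_right add_0)

lemma is_ring_hom_uminus:
  assumes "is_ring_hom f"
  shows "f (- x) = - f x"
proof -
  have "f x + f (- x) = f (x + - x)"
    using assms unfolding is_ring_hom_def by metis
  also have "\<dots> = 0"
    using is_ring_hom_0[OF assms] by simp
  finally show ?thesis
    by (simp add: eq_neg_iff_add_eq_0 add.commute)
qed

lemma poly_map_poly_ring_hom:
  assumes "is_ring_hom f"
  shows "poly (map_poly f p) (f x) = f (poly p x)"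
proof (induction p)
  case 0
  show ?case using is_ring_hom_0[OF assms] by simp
next
  case (pCons c p)
  then show ?case
    using assms is_ring_hom_0[OF assms] by (simp add: map_poly_pCons is_ring_hom_def)
qed

lemma subring_0: "is_subring S \<Longrightarrow> 0 \<in> S"
  unfolding is_subring_def by (metis add.right_inverse)

lemma subring_power: "is_subring S \<Longrightarrow> x \<in> S \<Longrightarrow> x ^ n \<in> S"
  unfolding is_subring_def by (induction n) auto

lemma subring_vimage:
  assumes "is_ring_hom f" and "is_subring T"
  shows "is_subring (f -` T)"
  using assms is_ring_hom_uminus[OF assms(1)] unfolding is_subring_def is_ring_hom_def by auto

lemma gen_subalgebra_least:
  assumes "is_subring T" and "range iA \<subseteq> T" and "set as \<subseteq> T"
  shows "gen_subalgebra iA as \<subseteq> T"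
  unfolding gen_subalgebra_def using assms by blast

lemma integral_over_mono: "S \<subseteq> T \<Longrightarrow> integral_over S x \<Longrightarrow> integral_over T x"
  unfolding integral_over_def by blast

lemma integral_over_ring_hom_image:
  assumes "is_ring_hom f" and "integral_over S x"
  shows "integral_over (f ` S) (f x)"
proof -
  obtain p where p: "lead_coeff p = 1" "\<forall>i. coeff p i \<in> S" "poly p x = 0"
    using assms(2) unfolding integral_over_def by blast
  have f0: "f 0 = 0" and f1: "f 1 = 1"
    using assms(1) is_ring_hom_0 unfolding is_ring_hom_def by blast+
  have "lead_coeff (map_poly f p) = 1"
    using lead_coeff_map_poly_nz[of f p] p(1) f0 f1 by simp
  moreover have "\<forall>i. coeff (map_poly f p) i \<in> f ` S"
    using p(2) by (simp add: coeff_map_poly[of f, OF f0])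
  moreover have "poly (map_poly f p) (f x) = 0"
    using p(3) f0 by (simp add: poly_map_poly_ring_hom[OF assms(1)])
  ultimately show ?thesis
    unfolding integral_over_def by blast
qed

lemma integral_over_iff_monic_sum:
  assumes "0 \<in> S"
  shows "integral_over S x \<longleftrightarrow>
    (\<exists>n c. c n = 1 \<and> (\<forall>i\<le>n. c i \<in> S) \<and> (\<Sum>i\<le>n. c i * x ^ i) = 0)"
proof
  assume "integral_over S x"
  then obtain p where "lead_coeff p = 1" "\<forall>i. coeff p i \<in> S" "poly p x = 0"
    unfolding integral_over_def by blast
  then show "\<exists>n c. c n = 1 \<and> (\<forall>i\<le>n. c i \<in> S) \<and> (\<Sum>i\<le>n. c i * x ^ i) = 0"
    by (intro exI[of _ "degree p"] exI[of _ "coeff p"]) (simp add: poly_altdef)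
next
  assume "\<exists>n c. c n = 1 \<and> (\<forall>i\<le>n. c i \<in> S) \<and> (\<Sum>i\<le>n. c i * x ^ i) = 0"
  then obtain n c where c: "c n = 1" "\<forall>i\<le>n. c i \<in> S" "(\<Sum>i\<le>n. c i * x ^ i) = 0"
    by blast
  define p where "p = (\<Sum>i\<le>n. monom (c i) i)"
  have coeff_p: "coeff p j = (if j \<le> n then c j else 0)" for j
    unfolding p_def coeff_sum by (auto simp: coeff_monom)
  have "degree p \<le> n"
    unfolding p_def by (intro degree_sum_le) (auto intro: order.trans[OF degree_monom_le])
  moreover have "n \<le> degree p"
    using coeff_p[of n] c(1) by (intro le_degree) simp
  ultimately have "lead_coeff p = 1"
    using coeff_p[of n] c(1) by simp
  moreover have "poly p x = 0"
    using c(3) unfolding p_def poly_sum poly_monom .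
  ultimately show "integral_over S x"
    unfolding integral_over_def using coeff_p c(2) assms by (intro exI[of _ p]) auto
qed

text \<open>\<open>F z\<close> is a root of the monic polynomial with coefficients \<open>F\<^bsup>n-i\<^esup> c\<^sub>i\<close>.\<close>
lemma integral_over_scaled_root:
  assumes T: "is_subring T" "F \<in> T"
    and c: "c n = 1" "\<forall>i<n. F * c i \<in> T" "(\<Sum>i\<le>n. c i * z ^ i) = 0"
  shows "integral_over T (F * z)"
proof -
  define d where "d i = F ^ (n - i) * c i" for i
  have "d i \<in> T" if "i \<le> n" for i
  proof (cases "i = n")
    case True
    then show ?thesis using c(1) T(1) by (simp add: d_def is_subring_def)
  next
    case False
    with that have "d i = F ^ (n - i - 1) * (F * c i)"
      by (simp add: d_def power_eq_if)
    then show ?thesis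
      using False that c(2) T subring_power[OF T] unfolding is_subring_def by simp
  qed
  moreover have "(\<Sum>i\<le>n. d i * (F * z) ^ i) = F ^ n * (\<Sum>i\<le>n. c i * z ^ i)"
    unfolding sum_distrib_left
  proof (rule sum.cong[OF refl])
    fix i assume "i \<in> {..n}"
    then have "F ^ (n - i) * F ^ i = F ^ n" by (simp flip: power_add)
    then show "d i * (F * z) ^ i = F ^ n * (c i * z ^ i)"
      unfolding d_def power_mult_distrib by (metis mult.assoc mult.left_commute)
  qed
  ultimately show ?thesis
    unfolding integral_over_iff_monic_sum[OF subring_0[OF T(1)]]
    using c(1,3) by (intro exI[of _ n] exI[of _ d]) (auto simp: d_def)
qed

lemma Fract_range_subring: "is_subring (range (\<lambda>b. Fract b 1))"
  unfolding is_subring_def by (auto simp: One_fract_def intro: range_eqI)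

lemma loc_elem_iff: "x \<in> loc_elem f \<longleftrightarrow> (\<exists>b n. x = Fract b (f ^ n))"
  unfolding loc_elem_def by blast

lemma loc_elem_subring:
  assumes "f \<noteq> 0"
  shows "is_subring (loc_elem f)"
  unfolding is_subring_def
proof (intro conjI ballI)
  show "1 \<in> loc_elem f"
    unfolding loc_elem_iff by (intro exI[of _ 1] exI[of _ 0]) (simp add: One_fract_def)
next
  fix x y assume "x \<in> loc_elem f" "y \<in> loc_elem f"
  then obtain a m b n where xy: "x = Fract a (f ^ m)" "y = Fract b (f ^ n)"
    unfolding loc_elem_iff by blast
  have "x + y = Fract (a * f ^ n + b * f ^ m) (f ^ (m + n))"
    using assms by (simp add: xy power_add)
  moreover have "x * y = Fract (a * b) (f ^ (m + n))"
    by (simp add: xy power_add)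
  moreover have "- x = Fract (- a) (f ^ m)"
    by (simp add: xy)
  ultimately show "x + y \<in> loc_elem f" "x * y \<in> loc_elem f" "- x \<in> loc_elem f"
    unfolding loc_elem_iff by blast+
qed

lemma loc_elem_subset_mult:
  assumes "g \<noteq> 0"
  shows "loc_elem f \<subseteq> loc_elem (f * g)"
proof
  fix x assume "x \<in> loc_elem f"
  then obtain b n where "x = Fract b (f ^ n)"
    unfolding loc_elem_iff by blast
  also have "\<dots> = Fract (g ^ n * b) ((f * g) ^ n)"
    using mult_fract_cancel[of "g ^ n" b "f ^ n"] assms by (simp add: power_mult_distrib mult.commute)
  finally show "x \<in> loc_elem (f * g)"
    unfolding loc_elem_iff by blast
qed

lemma loc_elem_common_denominator:
  assumes "finite X" and "X \<subseteq> loc_elem f" and "f \<noteq> 0"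
  shows "\<exists>k. \<forall>x\<in>X. Fract (f ^ k) 1 * x \<in> range (\<lambda>b. Fract b 1)"
  using assms(1,2)
proof (induction X rule: finite_induct)
  case empty
  show ?case by simp
next
  case (insert x X)
  then obtain k where k: "\<forall>y\<in>X. Fract (f ^ k) 1 * y \<in> range (\<lambda>b. Fract b 1)"
    by blast
  from insert(4) have "x \<in> loc_elem f"
    by simp
  then obtain b m where x: "x = Fract b (f ^ m)"
    unfolding loc_elem_iff by blast
  have "Fract (f ^ (m + k)) 1 * x = Fract (f ^ m * (f ^ k * b)) (f ^ m * 1)"
    by (simp add: x power_add mult.assoc)
  also have "\<dots> = Fract (f ^ k * b) 1"
    using assms(3) by (intro mult_fract_cancel) simp
  finally have "Fract (f ^ (m + k)) 1 * x \<in> range (\<lambda>b. Fract b 1)"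
    by (rule range_eqI[where f = "\<lambda>b. Fract b 1"])
  moreover have "Fract (f ^ (m + k)) 1 * y \<in> range (\<lambda>b. Fract b 1)" if "y \<in> X" for y
  proof -
    from k that have "Fract (f ^ k) 1 * y \<in> range (\<lambda>b. Fract b 1)"
      by blast
    then obtain c where c: "Fract (f ^ k) 1 * y = Fract c 1"
      by (rule rangeE)
    have "Fract (f ^ (m + k)) 1 * y = Fract (f ^ m) 1 * (Fract (f ^ k) 1 * y)"
      by (simp add: power_add mult.assoc)
    also have "\<dots> = Fract (f ^ m * c) 1"
      by (simp add: c)
    finally show ?thesis
      by (rule range_eqI[where f = "\<lambda>b. Fract b 1"])
  qed
  ultimately show ?case
    by (intro exI[of _ "m + k"]) auto
qed

lemma loc_elem_integrally_closed:
  fixes f :: "'b::idom"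
  assumes normal: "normal_domain TYPE('b)" and "f \<noteq> 0"
    and "integral_over (loc_elem f) z"
  shows "z \<in> loc_elem f"
proof -
  obtain n c where c: "c n = 1" "\<forall>i\<le>n. c i \<in> loc_elem f" "(\<Sum>i\<le>n. c i * z ^ i) = 0"
    using assms(3) subring_0[OF loc_elem_subring[OF \<open>f \<noteq> 0\<close>]]
    by (auto simp: integral_over_iff_monic_sum)
  have "c ` {..<n} \<subseteq> loc_elem f"
    using c(2) by auto
  then obtain k where k: "\<forall>x \<in> c ` {..<n}. Fract (f ^ k) 1 * x \<in> range (\<lambda>b. Fract b 1)"
    using loc_elem_common_denominator \<open>f \<noteq> 0\<close> by blast
  have "integral_over (range (\<lambda>b. Fract b 1)) (Fract (f ^ k) 1 * z)"
    using Fract_range_subring k c(1,3) by (intro integral_over_scaled_root) auto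
  then have "Fract (f ^ k) 1 * z \<in> range (\<lambda>b. Fract b 1)"
    using normal unfolding normal_domain_def by blast
  then obtain b where b: "Fract (f ^ k) 1 * z = Fract b 1"
    by (rule rangeE)
  have "Fract (f ^ k) 1 \<noteq> 0"
    using \<open>f \<noteq> 0\<close> by (simp add: Zero_fract_def eq_fract)
  then have "z = (Fract (f ^ k) 1 * z) / Fract (f ^ k) 1"
    by simp
  also have "\<dots> = Fract b (f ^ k)"
    using b by simp
  finally show ?thesis
    unfolding loc_elem_iff by blast
qed

lemma loc_prime_finite_subset_loc_elem:
  assumes "prime_ideal P" and "finite X" and "X \<subseteq> loc_prime P"
  shows "\<exists>f. f \<notin> P \<and> X \<subseteq> loc_elem f"
  using assms(2,3)
proof (induction X rule: finite_induct)
  case empty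
  have "1 \<notin> P"
    using assms(1) unfolding prime_ideal_def is_ideal_def by (metis UNIV_eq_I mult.right_neutral)
  then show ?case by blast
next
  case (insert x X)
  then obtain f where f: "f \<notin> P" "X \<subseteq> loc_elem f"
    by blast
  from insert(4) have "x \<in> loc_prime P"
    by simp
  then obtain b s where x: "x = Fract b s" and s: "s \<notin> P"
    unfolding loc_prime_def by blast
  have nonzero: "f \<noteq> 0" "s \<noteq> 0"
    using f(1) s assms(1) unfolding prime_ideal_def is_ideal_def by auto
  have "x \<in> loc_elem s"
    unfolding x loc_elem_iff by (metis power_one_right)
  then have "x \<in> loc_elem (s * f)"
    using loc_elem_subset_mult[OF nonzero(1)] by blast
  moreover have "X \<subseteq> loc_elem (f * s)"
    using loc_elem_subset_mult[OF nonzero(2)] f(2) by blast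
  moreover have "f * s \<notin> P"
    using f(1) s assms(1) unfolding prime_ideal_def by blast
  ultimately show ?case
    by (metis insert_subset mult.commute)
qed

theorem lemma1p11:
  fixes iA :: "'r::comm_ring_1 \<Rightarrow> 'a::idom"
    and iB :: "'r \<Rightarrow> 'b::idom"
    and P :: "'b set"
    and \<phi> :: "'a \<Rightarrow> 'b fract"
  assumes "is_ring_hom iA" and "is_ring_hom iB"
    and "finite_expansion iA"
    and "normal_domain TYPE('b)"
    and "prime_ideal P"
    and "is_ring_hom \<phi>" and "range \<phi> \<subseteq> loc_prime P"
    and "\<forall>r. \<phi> (iA r) = Fract (iB r) 1"
  shows "\<exists>f. f \<notin> P \<and> (\<exists>\<psi> :: 'a \<Rightarrow> 'b fract. is_ring_hom \<psi> \<and> range \<psi> \<subseteq> loc_elem f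
            \<and> (\<forall>r. \<psi> (iA r) = Fract (iB r) 1) \<and> (\<forall>x. \<phi> x = \<psi> x))"
proof -
  obtain as where integral: "\<forall>x. integral_over (gen_subalgebra iA as) x"
    using assms(3) unfolding finite_expansion_def by blast
  have "\<phi> ` set as \<subseteq> loc_prime P"
    using assms(7) by blast
  then obtain f where f: "f \<notin> P" "\<phi> ` set as \<subseteq> loc_elem f"
    using loc_prime_finite_subset_loc_elem[OF assms(5) finite_imageI[OF finite_set]] by blast
  have "f \<noteq> 0"
    using f(1) assms(5) unfolding prime_ideal_def is_ideal_def by auto
  have "\<phi> (iA r) \<in> loc_elem f" for r
  proof -
    have "\<phi> (iA r) = Fract (iB r) (f ^ 0)"
      using assms(8) by simp
    then show ?thesis
      unfolding loc_elem_iff by blast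
  qed
  then have "gen_subalgebra iA as \<subseteq> \<phi> -` loc_elem f"
    using f(2) subring_vimage[OF assms(6) loc_elem_subring[OF \<open>f \<noteq> 0\<close>]]
    by (intro gen_subalgebra_least) auto
  then have "\<phi> ` gen_subalgebra iA as \<subseteq> loc_elem f"
    by blast
  then have "integral_over (loc_elem f) (\<phi> x)" for x
    using integral_over_ring_hom_image[OF assms(6) integral[rule_format]]
    by (rule integral_over_mono)
  then have "range \<phi> \<subseteq> loc_elem f"
    using loc_elem_integrally_closed[OF assms(4) \<open>f \<noteq> 0\<close>] by blast
  then show ?thesis
    using f(1) assms(6,8) by (intro exI[of _ f] conjI exI[of _ \<phi>]) auto
qed

end
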